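(* Let $L\subset\mathbb{R}$ be a real multiquadratic field of rank $t$, i.e. $L/\mathbb{Q}$ is Galois with $\mathrm{Gal}(L/\mathbb{Q})\cong(\mathbb{Z}/2\mathbb{Z})^t$, and let $\epsilon_1,\dots,\epsilon_{2^t-1}$ be the fundamental units of the $2^t-1$ quadratic subfields of $L$. Then the subspace of $\mathbb{F}_2^{2^t}$ spanned by the signatures (in $L$) of $-1,\epsilon_1,\dots,\epsilon_{2^t-1}$ has dimension at most $t+1$, and this maximum value $t+1$ is attained when every $\epsilon_i$ has norm $-1$.
   Context: For a totally real field $F$ of degree $n$ and $0\neq\alpha\in F$, the signature of $\alpha$ is the vector in $\mathbb{F}_2^n$ whose entry at a real embedding $v$ of $F$ is $0$ if $v(\alpha)>0$ and $1$ if $v(\alpha)<0$. *)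

theory Defs
  imports Complex_Main "HOL-Computational_Algebra.Polynomial" "HOL-Library.Z2"
    "HOL-Library.Function_Algebras" "HOL-Algebra.Elementary_Groups" "HOL-Algebra.Product_Groups"
begin

definition is_subfield :: "real set \<Rightarrow> bool" where
  "is_subfield K \<longleftrightarrow> 0 \<in> K \<and> 1 \<in> K \<and>
     (\<forall>x\<in>K. \<forall>y\<in>K. x + y \<in> K \<and> x * y \<in> K) \<and>
     (\<forall>x\<in>K. - x \<in> K) \<and> (\<forall>x\<in>K. x \<noteq> 0 \<longrightarrow> inverse x \<in> K)"

definition rat_degree :: "real set \<Rightarrow> nat \<Rightarrow> bool" where
  "rat_degree K n \<longleftrightarrow> (\<exists>b :: nat \<Rightarrow> real.
      (\<forall>i<n. b i \<in> K) \<and>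
      (\<forall>c :: nat \<Rightarrow> rat. (\<Sum>i<n. of_rat (c i) * b i) = 0 \<longrightarrow> (\<forall>i<n. c i = 0)) \<and>
      (\<forall>x\<in>K. \<exists>c :: nat \<Rightarrow> rat. x = (\<Sum>i<n. of_rat (c i) * b i)))"

definition embeddings :: "real set \<Rightarrow> (real \<Rightarrow> real) set" where
  "embeddings K = {\<sigma>. \<sigma> 1 = 1 \<and>
      (\<forall>x\<in>K. \<forall>y\<in>K. \<sigma> (x + y) = \<sigma> x + \<sigma> y \<and> \<sigma> (x * y) = \<sigma> x * \<sigma> y) \<and>
      (\<forall>x. x \<notin> K \<longrightarrow> \<sigma> x = 0)}"

definition automorphisms :: "real set \<Rightarrow> (real \<Rightarrow> real) set" where
  "automorphisms K = {\<sigma> \<in> embeddings K. \<sigma> ` K = K}"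

definition galois_group :: "real set \<Rightarrow> (real \<Rightarrow> real) monoid" where
  "galois_group K = \<lparr>carrier = automorphisms K, mult = (\<lambda>\<sigma> \<tau>. \<sigma> \<circ> \<tau>),
                      one = (\<lambda>x. if x \<in> K then x else 0)\<rparr>"

text \<open>L is a real multiquadratic field of rank t: L/Q finite Galois
  (|Aut(L/Q)| = [L:Q]) with Gal(L/Q) isomorphic to (Z/2Z)^t.\<close>
definition real_multiquadratic :: "real set \<Rightarrow> nat \<Rightarrow> bool" where
  "real_multiquadratic L t \<longleftrightarrow> is_subfield L \<and>
     (\<exists>n. rat_degree L n \<and> card (automorphisms L) = n) \<and>
     galois_group L \<cong> product_group {..<t} (\<lambda>_. integer_mod_group 2)"

definition quadratic_subfields :: "real set \<Rightarrow> real set set" where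
  "quadratic_subfields L = {K. is_subfield K \<and> K \<subseteq> L \<and> rat_degree K 2}"

definition is_unit_OK :: "real set \<Rightarrow> real \<Rightarrow> bool" where
  "is_unit_OK K u \<longleftrightarrow> u \<in> K \<and> u \<noteq> 0 \<and> algebraic_int u \<and> algebraic_int (inverse u)"

definition fundamental_unit :: "real set \<Rightarrow> real \<Rightarrow> bool" where
  "fundamental_unit K \<epsilon> \<longleftrightarrow> is_unit_OK K \<epsilon> \<and>
     (\<forall>u. is_unit_OK K u \<longrightarrow> (\<exists>k::int. u = \<epsilon> powi k \<or> u = - (\<epsilon> powi k)))"

definition field_norm :: "real set \<Rightarrow> real \<Rightarrow> real" where
  "field_norm K x = (\<Prod>\<sigma>\<in>embeddings K. \<sigma> x)"

definition signature :: "real set \<Rightarrow> real \<Rightarrow> (real \<Rightarrow> real) \<Rightarrow> bit" where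
  "signature L \<alpha> = (\<lambda>\<sigma>. if \<sigma> \<in> embeddings L \<and> \<sigma> \<alpha> < 0 then 1 else 0)"

end

theory Submission
  imports Defs
begin

(* The Galois group G of L, being isomorphic to (Z/2)^t, acts on L by involutions.  An element
   \<epsilon> of a quadratic subfield has at most two conjugates \<epsilon> and \<rho>, so \<sigma> \<mapsto> [\<sigma> \<epsilon> \<noteq> \<epsilon>] is an
   F_2-valued character of G, and the signature of \<epsilon> is sign(\<epsilon>) times the all-ones vector plus
   (sign \<epsilon> + sign \<rho>) times that character.  Characters of (Z/2)^t are combinations of the t
   coordinate characters \<chi>_i, so all signatures lie in a space of dimension t + 1.
   Conversely, for each i the twisted trace y = \<Sum>\<^sub>\<sigma> (-1)^\<chi>_i(\<sigma>) \<sigma>(x), nonzero for some x by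
   Dedekind's independence of characters, satisfies \<sigma> y = (-1)^\<chi>_i(\<sigma>) y; by Artin's fixed field
   argument y^2 is rational, so Q(y) is a quadratic subfield.  If its fundamental unit \<epsilon> has
   norm \<epsilon> \<sigma>(\<epsilon>) = -1, then \<sigma> \<epsilon> = -1/\<epsilon> has the sign opposite to \<epsilon> exactly where \<chi>_i(\<sigma>) = 1,
   so \<chi>_i is the signature of \<epsilon> plus a multiple of the all-ones vector. *)

interpretation fun_space: vector_space "\<lambda>(c::'a::field) (f::'b \<Rightarrow> 'a) x. c * f x"
  by unfold_locales (auto simp: fun_eq_iff algebra_simps)

lemma sum_apply: "(\<Sum>i\<in>A. f i) x = (\<Sum>i\<in>A. f i x)"
  by (induction A rule: infinite_finite_induct) auto

(* Reason about bit as the field F_2 rather than as boolean operations. *)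
declare add_bit_eq_xor [simp del] mult_bit_eq_and [simp del]

lemma bit_add_self [simp]: "(a::bit) + a = 0"
  by (cases a) simp_all

lemma bit_add_cancel_left [simp]: "(a::bit) + (a + b) = b"
  by (cases a; cases b) simp_all

lemma bit_eq_add_swap: "(a::bit) + b = c \<Longrightarrow> a = b + c"
  by (cases a; cases b; cases c) simp_all

definition sign_bit :: "real \<Rightarrow> bit" where
  "sign_bit x = (if x < 0 then 1 else 0)"

lemma sign_bit_minus_inverse: "x \<noteq> 0 \<Longrightarrow> sign_bit (- 1 / x) = sign_bit x + 1"
  by (auto simp: sign_bit_def divide_less_0_iff)

section \<open>Subfields of the reals and their embeddings\<close>

context
  fixes K assumes K: "is_subfield K"
begin

lemma subfield_zero [simp]: "0 \<in> K" and subfield_one [simp]: "1 \<in> K"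
  and subfield_add [simp]: "x \<in> K \<Longrightarrow> y \<in> K \<Longrightarrow> x + y \<in> K"
  and subfield_mult [simp]: "x \<in> K \<Longrightarrow> y \<in> K \<Longrightarrow> x * y \<in> K"
  and subfield_uminus [simp]: "x \<in> K \<Longrightarrow> - x \<in> K"
  and subfield_inverse [simp]: "x \<in> K \<Longrightarrow> inverse x \<in> K"
  using K by (auto simp: is_subfield_def)

lemma subfield_of_nat [simp]: "of_nat m \<in> K"
  by (induction m) auto

lemma subfield_of_int [simp]: "of_int k \<in> K"
  by (cases k rule: int_cases) (simp_all del: of_nat_Suc)

lemma subfield_of_rat [simp]: "of_rat r \<in> K"
proof -
  obtain a b where "(of_rat r :: real) = of_int a / of_int b"
    by (metis Rats_cases' Rats_of_rat)
  then show ?thesis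
    by (simp add: divide_inverse)
qed

lemma subfield_sum [simp]: "(\<And>i. i \<in> A \<Longrightarrow> f i \<in> K) \<Longrightarrow> sum f A \<in> K"
  by (induction A rule: infinite_finite_induct) auto

context
  fixes \<tau> assumes \<tau>: "\<tau> \<in> embeddings K"
begin

lemma embedding_one [simp]: "\<tau> 1 = 1"
  and embedding_add [simp]: "x \<in> K \<Longrightarrow> y \<in> K \<Longrightarrow> \<tau> (x + y) = \<tau> x + \<tau> y"
  and embedding_mult [simp]: "x \<in> K \<Longrightarrow> y \<in> K \<Longrightarrow> \<tau> (x * y) = \<tau> x * \<tau> y"
  and embedding_outside: "x \<notin> K \<Longrightarrow> \<tau> x = 0"
  using \<tau> by (auto simp: embeddings_def)

lemma embedding_zero [simp]: "\<tau> 0 = 0"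
  using embedding_add[of 0 0] by simp

lemma embedding_uminus [simp]: "x \<in> K \<Longrightarrow> \<tau> (- x) = - \<tau> x"
  using embedding_add[of x "- x"] by (simp add: eq_neg_iff_add_eq_0)

lemma embedding_of_nat [simp]: "\<tau> (of_nat m) = of_nat m"
  by (induction m) (simp_all add: add.commute)

lemma embedding_of_int [simp]: "\<tau> (of_int k) = of_int k"
  by (cases k rule: int_cases) (simp_all del: of_nat_Suc)

lemma embedding_of_rat [simp]: "\<tau> (of_rat r) = of_rat r"
proof -
  obtain a b where b: "b > 0" and r: "(of_rat r :: real) = of_int a / of_int b"
    by (metis Rats_cases' Rats_of_rat)
  then have ab: "of_int b * (of_rat r :: real) = of_int a"
    by simp
  have "of_int b * \<tau> (of_rat r) = \<tau> (of_int b * of_rat r)"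
    by simp
  also have "\<dots> = of_int b * of_rat r"
    using ab by simp
  finally show ?thesis
    using b by simp
qed

lemma embedding_sum: "(\<And>i. i \<in> A \<Longrightarrow> f i \<in> K) \<Longrightarrow> \<tau> (sum f A) = (\<Sum>i\<in>A. \<tau> (f i))"
  by (induction A rule: infinite_finite_induct) auto

end

end

section \<open>Dedekind's independence of embeddings\<close>

lemma embeddings_differ:
  assumes "\<sigma> \<in> embeddings K" "\<tau> \<in> embeddings K" "\<sigma> \<noteq> \<tau>"
  obtains z where "z \<in> K" "\<sigma> z \<noteq> \<tau> z"
proof -
  obtain z where z: "\<sigma> z \<noteq> \<tau> z"
    using assms(3) by (auto simp: fun_eq_iff)
  have "z \<in> K"
  proof (rule ccontr)
    assume "z \<notin> K"
    with z assms(1,2) show False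
      by (simp add: embeddings_def)
  qed
  with z that show thesis by blast
qed

lemma embedding_relation_twist:
  assumes K: "is_subfield K" and T: "T \<subseteq> embeddings K" and z: "z \<in> K"
    and rel: "\<forall>x\<in>K. (\<Sum>\<tau>\<in>T. u \<tau> * \<tau> x) = 0"
  shows "\<forall>x\<in>K. (\<Sum>\<tau>\<in>T. u \<tau> * (\<tau> z - c) * \<tau> x) = 0"
proof
  fix x assume x: "x \<in> K"
  have "\<tau> (z * x) = \<tau> z * \<tau> x" if "\<tau> \<in> T" for \<tau>
    using that T z x K by (simp add: subset_iff)
  then have "(\<Sum>\<tau>\<in>T. u \<tau> * (\<tau> z - c) * \<tau> x) = (\<Sum>\<tau>\<in>T. u \<tau> * \<tau> (z * x) - c * (u \<tau> * \<tau> x))"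
    by (intro sum.cong) (simp_all add: algebra_simps)
  also have "\<dots> = (\<Sum>\<tau>\<in>T. u \<tau> * \<tau> (z * x)) - c * (\<Sum>\<tau>\<in>T. u \<tau> * \<tau> x)"
    by (simp add: sum_subtractf sum_distrib_left)
  also have "\<dots> = 0"
    using rel x z K by simp
  finally show "(\<Sum>\<tau>\<in>T. u \<tau> * (\<tau> z - c) * \<tau> x) = 0" .
qed

text \<open>Dedekind's lemma: a shortest nontrivial relation among embeddings is shortened further by
  twisting it with \<open>\<tau> z - \<tau>\<^sub>0 z\<close>, which kills the \<open>\<tau>\<^sub>0\<close> term.\<close>

lemma embedding_relation_trivial:
  assumes K: "is_subfield K" and "finite T" "T \<subseteq> embeddings K"
    and "\<forall>x\<in>K. (\<Sum>\<tau>\<in>T. u \<tau> * \<tau> x) = 0"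
  shows "\<forall>\<tau>\<in>T. u \<tau> = 0"
  using assms(2-)
proof (induction "card T" arbitrary: T u rule: less_induct)
  case less
  note T = less.prems(1,2) and rel = less.prems(3)
  show ?case
  proof
    fix \<tau>\<^sub>1 assume \<tau>\<^sub>1: "\<tau>\<^sub>1 \<in> T"
    show "u \<tau>\<^sub>1 = 0"
    proof (cases "T = {\<tau>\<^sub>1}")
      case True
      with rel K have "u \<tau>\<^sub>1 * \<tau>\<^sub>1 1 = 0"
        by (auto dest: bspec[of _ _ 1])
      with True T(2) K show ?thesis
        by simp
    next
      case False
      then obtain \<tau>\<^sub>0 where \<tau>\<^sub>0: "\<tau>\<^sub>0 \<in> T" "\<tau>\<^sub>0 \<noteq> \<tau>\<^sub>1"
        using \<tau>\<^sub>1 by blast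
      obtain z where z: "z \<in> K" "\<tau>\<^sub>1 z \<noteq> \<tau>\<^sub>0 z"
        using embeddings_differ[of \<tau>\<^sub>1 K \<tau>\<^sub>0] \<tau>\<^sub>0 \<tau>\<^sub>1 T by blast
      have "\<forall>x\<in>K. (\<Sum>\<tau>\<in>T - {\<tau>\<^sub>0}. u \<tau> * (\<tau> z - \<tau>\<^sub>0 z) * \<tau> x) = 0"
        using embedding_relation_twist[OF K T(2) z(1) rel, of "\<tau>\<^sub>0 z"] T(1) \<tau>\<^sub>0(1)
        by (simp add: sum.remove)
      moreover have "card (T - {\<tau>\<^sub>0}) < card T"
        using T(1) \<tau>\<^sub>0(1) by (rule card_Diff1_less)
      ultimately have "\<forall>\<tau>\<in>T - {\<tau>\<^sub>0}. u \<tau> * (\<tau> z - \<tau>\<^sub>0 z) = 0"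
        using less.hyps[of "T - {\<tau>\<^sub>0}" "\<lambda>\<tau>. u \<tau> * (\<tau> z - \<tau>\<^sub>0 z)"] T by auto
      then have "u \<tau>\<^sub>1 * (\<tau>\<^sub>1 z - \<tau>\<^sub>0 z) = 0"
        using \<tau>\<^sub>0 \<tau>\<^sub>1 by blast
      with z(2) show ?thesis
        by simp
    qed
  qed
qed

lemma independent_embeddings:
  assumes "is_subfield K"
  shows "fun_space.independent (embeddings K)"
proof -
  have scalars_zero: "\<forall>v\<in>T. u v = 0"
    if T: "T \<subseteq> embeddings K" "finite T" and rel: "(\<Sum>v\<in>T. (\<lambda>x. u v * v x)) = 0" for T u
  proof -
    have "\<forall>x\<in>K. (\<Sum>v\<in>T. u v * v x) = 0"
      using fun_cong[OF rel] by (simp add: sum_apply)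
    then show ?thesis
      by (rule embedding_relation_trivial[OF assms T(2,1)])
  qed
  then show ?thesis
    unfolding fun_space.independent_explicit_finite_subsets
    by (intro allI impI) (rule scalars_zero)
qed

section \<open>Degree bounds and Artin's fixed field lemma\<close>

definition rat_spanning :: "real set \<Rightarrow> (nat \<Rightarrow> real) \<Rightarrow> nat \<Rightarrow> bool" where
  "rat_spanning K b n \<longleftrightarrow>
     (\<forall>i<n. b i \<in> K) \<and> (\<forall>x\<in>K. \<exists>c :: nat \<Rightarrow> rat. x = (\<Sum>i<n. of_rat (c i) * b i))"

lemma rat_degree_obtains_spanning:
  assumes "rat_degree K n"
  obtains b where "rat_spanning K b n"
  using assms by (auto simp: rat_degree_def rat_spanning_def)

text \<open>The coefficients are a choice: they are unique only if \<open>b\<close> is a basis, which is never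
  needed below.\<close>

definition rat_coords :: "(nat \<Rightarrow> real) \<Rightarrow> nat \<Rightarrow> real \<Rightarrow> nat \<Rightarrow> rat" where
  "rat_coords b n x = (SOME c. x = (\<Sum>i<n. of_rat (c i) * b i))"

definition coord_functional :: "real set \<Rightarrow> (nat \<Rightarrow> real) \<Rightarrow> nat \<Rightarrow> nat \<Rightarrow> real \<Rightarrow> real" where
  "coord_functional K b n i x = (if x \<in> K then of_rat (rat_coords b n x i) else 0)"

lemma rat_coords_sum:
  assumes "rat_spanning K b n" and "x \<in> K"
  shows "x = (\<Sum>i<n. of_rat (rat_coords b n x i) * b i)"
proof -
  from assms obtain c where "x = (\<Sum>i<n. of_rat (c i) * b i)"
    by (auto simp: rat_spanning_def)
  then show ?thesis
    unfolding rat_coords_def by (rule someI[where P = "\<lambda>c. x = (\<Sum>i<n. of_rat (c i) * b i)"])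
qed

lemma embedding_in_span_coord_functionals:
  assumes K: "is_subfield K" and b: "rat_spanning K b n" and \<tau>: "\<tau> \<in> embeddings K"
  shows "\<tau> \<in> fun_space.span (coord_functional K b n ` {..<n})"
proof -
  have bK: "b i \<in> K" if "i < n" for i
    using b that by (simp add: rat_spanning_def)
  have pointwise: "\<tau> x = (\<Sum>i<n. \<tau> (b i) * coord_functional K b n i x)" for x
  proof (cases "x \<in> K")
    case True
    have "\<tau> x = \<tau> (\<Sum>i<n. of_rat (rat_coords b n x i) * b i)"
      using arg_cong[OF rat_coords_sum[OF b True], of \<tau>] .
    also have "\<dots> = (\<Sum>i<n. of_rat (rat_coords b n x i) * \<tau> (b i))"
      using K \<tau> bK by (subst embedding_sum[OF K \<tau>]) auto
    also have "\<dots> = (\<Sum>i<n. \<tau> (b i) * coord_functional K b n i x)"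
      using True by (simp add: coord_functional_def mult.commute)
    finally show ?thesis .
  qed (simp add: embedding_outside[OF K \<tau>] coord_functional_def)
  have "\<tau> = (\<Sum>i<n. (\<lambda>x. \<tau> (b i) * coord_functional K b n i x))"
    by (rule ext) (unfold sum_apply, rule pointwise)
  also have "\<dots> \<in> fun_space.span (coord_functional K b n ` {..<n})"
    by (intro fun_space.span_sum fun_space.span_scale fun_space.span_base) auto
  finally show ?thesis .
qed

lemma card_embeddings_le:
  assumes K: "is_subfield K" and "rat_degree K n"
  shows "finite (embeddings K)" and "card (embeddings K) \<le> n"
proof -
  obtain b where b: "rat_spanning K b n"
    using assms(2) by (rule rat_degree_obtains_spanning)
  have "finite (embeddings K) \<and> card (embeddings K) \<le> card (coord_functional K b n ` {..<n})"
    using independent_embeddings[OF K] embedding_in_span_coord_functionals[OF K b]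
    by (intro fun_space.independent_span_bound) auto
  moreover have "card (coord_functional K b n ` {..<n}) \<le> n"
    using card_image_le[of "{..<n}"] by simp
  ultimately show "finite (embeddings K)" and "card (embeddings K) \<le> n"
    by auto
qed

lemma automorphisms_subset_embeddings: "automorphisms K \<subseteq> embeddings K"
  by (auto simp: automorphisms_def)

lemma embeddings_eq_automorphisms:
  assumes "is_subfield L" and "rat_degree L n" and "card (automorphisms L) = n"
  shows "embeddings L = automorphisms L"
proof -
  note finite = card_embeddings_le(1)[OF assms(1,2)]
  have "card (automorphisms L) \<le> card (embeddings L)"
    using finite automorphisms_subset_embeddings by (rule card_mono)
  with card_embeddings_le(2)[OF assms(1,2)] assms(3)
  have "card (automorphisms L) = card (embeddings L)"
    by simp
  from card_subset_eq[OF finite automorphisms_subset_embeddings this] show ?thesis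
    by (rule sym)
qed

text \<open>With \<open>n = |Aut(L)|\<close> independent automorphisms in the span of the \<open>n\<close> coordinate
  functionals, the automorphisms span them in turn.\<close>

lemma coord_functional_in_span_automorphisms:
  assumes L: "is_subfield L" and b: "rat_spanning L b n"
    and finite: "finite (automorphisms L)" and card: "card (automorphisms L) = n" and "i < n"
  shows "coord_functional L b n i \<in> fun_space.span (automorphisms L)"
proof (rule ccontr)
  let ?G = "automorphisms L" and ?C = "coord_functional L b n ` {..<n}"
  assume not_in: "coord_functional L b n i \<notin> fun_space.span ?G"
  then have "coord_functional L b n i \<notin> ?G"
    using fun_space.span_base by blast
  then have "card (insert (coord_functional L b n i) ?G) = n + 1"
    using finite card by simp
  moreover have "fun_space.independent (insert (coord_functional L b n i) ?G)"
    using fun_space.independent_insertI[OF not_in]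
      fun_space.independent_mono[OF independent_embeddings[OF L] automorphisms_subset_embeddings]
    by blast
  moreover have "insert (coord_functional L b n i) ?G \<subseteq> fun_space.span ?C"
    using embedding_in_span_coord_functionals[OF L b] automorphisms_subset_embeddings \<open>i < n\<close>
    by (auto intro: fun_space.span_base)
  moreover have "finite ?C"
    by simp
  ultimately have "n + 1 \<le> card ?C"
    by (metis fun_space.independent_span_bound)
  moreover have "card ?C \<le> n"
    using card_image_le[of "{..<n}"] by simp
  ultimately show False
    by simp
qed

text \<open>Artin: every function in the span of the automorphisms commutes with multiplication by
  a fixed element \<open>z\<close>; applied to a coordinate functional that does not vanish at \<open>1\<close>, this
  expresses \<open>z\<close> as a quotient of two rational coordinates.\<close>

lemma fixed_element_rational:
  assumes L: "is_subfield L" and deg: "rat_degree L n" and card: "card (automorphisms L) = n"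
    and z: "z \<in> L" and fixed: "\<forall>\<sigma>\<in>automorphisms L. \<sigma> z = z"
  shows "z \<in> \<rat>"
proof -
  obtain b where b: "rat_spanning L b n"
    using deg by (rule rat_degree_obtains_spanning)
  have finite: "finite (automorphisms L)"
    using card_embeddings_le(1)[OF L deg] automorphisms_subset_embeddings by (rule finite_subset[rotated])
  define commutes where "commutes f \<longleftrightarrow> (\<forall>x\<in>L. f (z * x) = z * f x)" for f :: "real \<Rightarrow> real"
  have "fun_space.subspace (Collect commutes)"
    by (simp add: fun_space.subspace_def commutes_def distrib_left mult.left_commute)
  moreover have "commutes \<sigma>" if "\<sigma> \<in> automorphisms L" for \<sigma>
  proof -
    have "\<sigma> \<in> embeddings L"
      using that automorphisms_subset_embeddings by blast
    with that fixed z L show ?thesis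
      by (simp add: commutes_def)
  qed
  ultimately have commutes_coord: "commutes (coord_functional L b n i)" if "i < n" for i
    using fun_space.span_induct[OF coord_functional_in_span_automorphisms[OF L b finite card that]]
    by blast
  have "(\<Sum>i<n. of_rat (rat_coords b n 1 i) * b i) \<noteq> (0::real)"
    using rat_coords_sum[OF b subfield_one[OF L]] by (metis zero_neq_one)
  then obtain i where i: "i < n" "rat_coords b n 1 i \<noteq> 0"
    by (rule sum.not_neutral_contains_not_neutral) auto
  have "coord_functional L b n i (z * 1) = z * coord_functional L b n i 1"
    using commutes_coord[OF i(1)] subfield_one[OF L] unfolding commutes_def by blast
  then have "of_rat (rat_coords b n z i) = z * of_rat (rat_coords b n 1 i)"
    using z L by (simp add: coord_functional_def)
  then have "z = of_rat (rat_coords b n z i / rat_coords b n 1 i)"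
    using i(2) by (simp add: of_rat_divide field_simps)
  then show ?thesis
    by (metis Rats_of_rat)
qed

section \<open>Quadratic subfields\<close>

definition restrict_embedding :: "real set \<Rightarrow> (real \<Rightarrow> real) \<Rightarrow> real \<Rightarrow> real" where
  "restrict_embedding K \<sigma> x = (if x \<in> K then \<sigma> x else 0)"

lemma restrict_embedding_in_embeddings:
  assumes K: "is_subfield K" "K \<subseteq> L" and \<sigma>: "\<sigma> \<in> embeddings L"
  shows "restrict_embedding K \<sigma> \<in> embeddings K"
proof -
  have one: "\<sigma> 1 = 1"
    and hom: "\<And>x y. x \<in> L \<Longrightarrow> y \<in> L \<Longrightarrow> \<sigma> (x + y) = \<sigma> x + \<sigma> y \<and> \<sigma> (x * y) = \<sigma> x * \<sigma> y"
    using \<sigma> unfolding embeddings_def by blast+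
  have "x \<in> L" if "x \<in> K" for x
    using that K(2) by blast
  with K(1) one hom show ?thesis
    unfolding embeddings_def restrict_embedding_def by simp
qed

lemma restrict_id_in_embeddings:
  assumes "is_subfield K"
  shows "restrict_embedding K (\<lambda>x. x) \<in> embeddings K"
proof -
  have "1 \<in> K" "\<And>x y. x \<in> K \<Longrightarrow> y \<in> K \<Longrightarrow> x + y \<in> K \<and> x * y \<in> K"
    using assms by simp_all
  then show ?thesis
    unfolding embeddings_def restrict_embedding_def by simp
qed

lemma card_le_2_obtains_doubleton:
  assumes "finite A" "card A \<le> 2" "a \<in> A"
  obtains b where "A \<subseteq> {a, b}"
proof -
  have "card (A - {a}) \<le> Suc 0"
    using assms by simp
  then have "\<forall>x\<in>A - {a}. \<forall>y\<in>A - {a}. x = y"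
    using assms(1) by (simp add: card_le_Suc0_iff_eq)
  then show thesis
    using that by blast
qed

text \<open>\<open>\<rat> + \<rat> y\<close>, which is the field \<open>\<rat>(y)\<close> when \<open>y\<^sup>2\<close> is rational.\<close>

definition rat_adjoin :: "real \<Rightarrow> real set" where
  "rat_adjoin y = {z. \<exists>a b. z = of_rat a + of_rat b * y}"

lemma rat_adjoin_memI: "of_rat a + of_rat b * y \<in> rat_adjoin y"
  unfolding rat_adjoin_def by blast

lemma rat_adjoin_memE:
  assumes "x \<in> rat_adjoin y"
  obtains a b where "x = of_rat a + of_rat b * y"
  using assms unfolding rat_adjoin_def by blast

lemma rat_adjoin_norm_nonzero:
  assumes y: "y \<notin> \<rat>" "y * y = of_rat q" and nonzero: "of_rat a + of_rat b * y \<noteq> 0"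
  shows "a * a - b * b * q \<noteq> 0"
proof
  assume norm: "a * a - b * b * q = 0"
  show False
  proof (cases "b = 0")
    case True
    with norm nonzero show False
      by simp
  next
    case False
    with norm have "q = (a / b) * (a / b)"
      by (simp add: field_simps)
    with y(2) have "(y - of_rat (a / b)) * (y + of_rat (a / b)) = 0"
      by (simp add: algebra_simps flip: of_rat_mult)
    then have "y = of_rat (a / b) \<or> y = - of_rat (a / b)"
      by (auto simp: eq_neg_iff_add_eq_0)
    with y(1) show False
      by (metis Rats_minus_iff Rats_of_rat)
  qed
qed

lemma rat_adjoin_inverse:
  assumes y: "y \<notin> \<rat>" "y * y = of_rat q" and "x \<in> rat_adjoin y" "x \<noteq> 0"
  shows "inverse x \<in> rat_adjoin y"
proof -
  obtain a b where x: "x = of_rat a + of_rat b * y"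
    using assms(3) by (rule rat_adjoin_memE)
  define D where "D = a * a - b * b * q"
  have D: "(of_rat D :: real) \<noteq> 0"
    unfolding D_def using rat_adjoin_norm_nonzero[OF y] \<open>x \<noteq> 0\<close> x by simp
  have "x * (of_rat (a / D) + of_rat (- b / D) * y)
      = (of_rat a * of_rat a - of_rat b * of_rat b * (y * y)) / of_rat D"
    using D by (simp add: x of_rat_divide of_rat_minus field_simps)
  also have "\<dots> = 1"
    using D y(2) by (simp add: D_def of_rat_diff of_rat_mult)
  finally have "inverse x = of_rat (a / D) + of_rat (- b / D) * y"
    by (rule inverse_unique)
  then show ?thesis
    by (simp only: rat_adjoin_memI)
qed

lemma rat_adjoin_subfield:
  assumes y: "y \<notin> \<rat>" "y * y = of_rat q"
  shows "is_subfield (rat_adjoin y)"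
  unfolding is_subfield_def
proof (intro conjI ballI impI)
  show "0 \<in> rat_adjoin y" "1 \<in> rat_adjoin y"
    using rat_adjoin_memI[of 0 0 y] rat_adjoin_memI[of 1 0 y] by simp_all
  fix x z assume "x \<in> rat_adjoin y" "z \<in> rat_adjoin y"
  then obtain a b c d where x: "x = of_rat a + of_rat b * y" and z: "z = of_rat c + of_rat d * y"
    by (metis rat_adjoin_memE)
  have "x + z = of_rat (a + c) + of_rat (b + d) * y"
    using x z by (simp add: of_rat_add algebra_simps)
  then show "x + z \<in> rat_adjoin y"
    by (simp only: rat_adjoin_memI)
  have "x * z = of_rat (a * c + b * d * q) + of_rat (a * d + b * c) * y"
    using x z y(2) by (simp add: of_rat_add of_rat_mult algebra_simps)
  then show "x * z \<in> rat_adjoin y"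
    by (simp only: rat_adjoin_memI)
next
  fix x assume "x \<in> rat_adjoin y"
  then obtain a b where x: "x = of_rat a + of_rat b * y"
    by (rule rat_adjoin_memE)
  have "- x = of_rat (- a) + of_rat (- b) * y"
    using x by (simp add: of_rat_minus)
  then show "- x \<in> rat_adjoin y"
    by (simp only: rat_adjoin_memI)
  assume "x \<noteq> 0"
  with y \<open>x \<in> rat_adjoin y\<close> show "inverse x \<in> rat_adjoin y"
    by (rule rat_adjoin_inverse)
qed

lemma rat_degree_rat_adjoin:
  assumes y: "y \<notin> \<rat>"
  shows "rat_degree (rat_adjoin y) 2"
  unfolding rat_degree_def
proof (intro exI[of _ "\<lambda>i. if i = 0 then 1 else y"] conjI allI impI ballI)
  fix i :: nat
  show "(if i = 0 then 1 else y) \<in> rat_adjoin y"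
    using rat_adjoin_memI[of 1 0 y] rat_adjoin_memI[of 0 1 y] by simp
next
  fix c :: "nat \<Rightarrow> rat" and i :: nat
  assume "(\<Sum>i<2. of_rat (c i) * (if i = 0 then 1 else y)) = 0" and "i < 2"
  then have rel: "of_rat (c 0) + of_rat (c 1) * y = 0"
    by (simp add: numeral_2_eq_2)
  have "c 1 = 0"
  proof (rule ccontr)
    assume "c 1 \<noteq> 0"
    with rel have "y = of_rat (- c 0 / c 1)"
      by (simp add: of_rat_divide of_rat_minus field_simps)
    with y show False
      by (metis Rats_of_rat)
  qed
  with rel \<open>i < 2\<close> show "c i = 0"
    by (cases i) (simp_all add: numeral_2_eq_2 less_Suc_eq)
next
  fix x assume "x \<in> rat_adjoin y"
  then obtain a b where "x = of_rat a + of_rat b * y"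
    by (rule rat_adjoin_memE)
  then show "\<exists>c :: nat \<Rightarrow> rat. x = (\<Sum>i<2. of_rat (c i) * (if i = 0 then 1 else y))"
    by (intro exI[of _ "\<lambda>i. if i = 0 then a else b"]) (simp add: numeral_2_eq_2)
qed

lemma rat_adjoin_subset:
  assumes "is_subfield L" "y \<in> L"
  shows "rat_adjoin y \<subseteq> L"
  using assms by (auto simp: rat_adjoin_def)

lemma rat_adjoin_quadratic_subfield:
  assumes "is_subfield L" "y \<in> L" "y \<notin> \<rat>" "y * y = of_rat q"
  shows "rat_adjoin y \<in> quadratic_subfields L"
  using rat_adjoin_subfield[OF assms(3,4)] rat_adjoin_subset[OF assms(1,2)] rat_degree_rat_adjoin[OF assms(3)]
  by (simp add: quadratic_subfields_def)

lemma embedding_rat_adjoin: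
  assumes "is_subfield L" "\<sigma> \<in> embeddings L" "y \<in> L"
  shows "\<sigma> (of_rat a + of_rat b * y) = of_rat a + of_rat b * \<sigma> y"
  using assms by simp

lemma field_norm_rat_adjoin:
  assumes L: "is_subfield L" and y: "y \<in> L" "y \<notin> \<rat>" "y * y = of_rat q"
    and \<sigma>: "\<sigma> \<in> embeddings L" "\<sigma> y = - y"
  shows "field_norm (rat_adjoin y) (of_rat a + of_rat b * y)
    = (of_rat a + of_rat b * y) * (of_rat a - of_rat b * y)"
proof -
  let ?K = "rat_adjoin y"
  let ?\<iota> = "restrict_embedding ?K (\<lambda>x. x)" and ?\<rho> = "restrict_embedding ?K \<sigma>"
  note K = rat_adjoin_subfield[OF y(2,3)] rat_adjoin_subset[OF L y(1)]
  have yK: "y \<in> ?K"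
    using rat_adjoin_memI[of 0 1 y] by simp
  have "y \<noteq> 0"
    using y(2) by auto
  with yK \<sigma>(2) have "?\<iota> y \<noteq> ?\<rho> y"
    by (simp add: restrict_embedding_def)
  then have "?\<iota> \<noteq> ?\<rho>"
    by metis
  moreover have "{?\<iota>, ?\<rho>} \<subseteq> embeddings ?K"
    using restrict_id_in_embeddings[OF K(1)] restrict_embedding_in_embeddings[OF K \<sigma>(1)] by simp
  moreover note card_embeddings_le[OF K(1) rat_degree_rat_adjoin[OF y(2)]]
  ultimately have "embeddings ?K = {?\<iota>, ?\<rho>}"
    by (intro card_seteq[symmetric]) simp_all
  moreover have "of_rat a + of_rat b * y \<in> ?K"
    by (rule rat_adjoin_memI)
  ultimately show ?thesis
    using \<open>?\<iota> \<noteq> ?\<rho>\<close> embedding_rat_adjoin[OF L \<sigma>(1) y(1)] \<sigma>(2)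
    by (simp add: field_norm_def restrict_embedding_def)
qed

section \<open>The Galois group of a multiquadratic field\<close>

locale multiquadratic =
  fixes L :: "real set" and n t :: nat and \<phi> :: "(real \<Rightarrow> real) \<Rightarrow> nat \<Rightarrow> int"
  assumes subfield: "is_subfield L" and degree: "rat_degree L n"
    and card_automorphisms: "card (automorphisms L) = n"
    and iso: "\<phi> \<in> iso (galois_group L) (product_group {..<t} (\<lambda>_. integer_mod_group 2))"
begin

abbreviation G :: "(real \<Rightarrow> real) set" where
  "G \<equiv> automorphisms L"

definition idL :: "real \<Rightarrow> real" where
  "idL = restrict_embedding L (\<lambda>x. x)"

lemma embeddings_eq: "embeddings L = G"
  using embeddings_eq_automorphisms[OF subfield degree card_automorphisms] .

lemma finite_G: "finite G"
  using card_embeddings_le(1)[OF subfield degree] by (simp add: embeddings_eq)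

lemma G_embedding: "\<sigma> \<in> G \<Longrightarrow> \<sigma> \<in> embeddings L"
  by (simp add: embeddings_eq)

lemma G_closed: "\<sigma> \<in> G \<Longrightarrow> x \<in> L \<Longrightarrow> \<sigma> x \<in> L"
  by (auto simp: automorphisms_def)

lemma G_outside: "\<sigma> \<in> G \<Longrightarrow> x \<notin> L \<Longrightarrow> \<sigma> x = 0"
  by (rule embedding_outside[OF subfield G_embedding])

lemma G_comp:
  assumes \<sigma>: "\<sigma> \<in> G" and \<tau>: "\<tau> \<in> G"
  shows "\<sigma> \<circ> \<tau> \<in> G"
proof -
  note \<sigma>E = G_embedding[OF \<sigma>] and \<tau>E = G_embedding[OF \<tau>]
  have "(\<sigma> \<circ> \<tau>) 1 = 1"
    using \<sigma>E \<tau>E subfield by simp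
  moreover have "(\<sigma> \<circ> \<tau>) (x + y) = (\<sigma> \<circ> \<tau>) x + (\<sigma> \<circ> \<tau>) y \<and>
      (\<sigma> \<circ> \<tau>) (x * y) = (\<sigma> \<circ> \<tau>) x * (\<sigma> \<circ> \<tau>) y"
    if "x \<in> L" "y \<in> L" for x y
    using that \<sigma>E \<tau>E subfield G_closed[OF \<tau>] by simp
  moreover have "(\<sigma> \<circ> \<tau>) x = 0" if "x \<notin> L" for x
    using G_outside[OF \<tau> that] \<sigma>E subfield by simp
  moreover have "\<sigma> ` L = L" "\<tau> ` L = L"
    using \<sigma> \<tau> by (simp_all add: automorphisms_def)
  then have "(\<sigma> \<circ> \<tau>) ` L = L"
    by (metis image_comp)
  ultimately show ?thesis
    unfolding automorphisms_def embeddings_def by blast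
qed

lemma idL_G: "idL \<in> G"
  using restrict_id_in_embeddings[OF subfield]
  by (auto simp: idL_def automorphisms_def restrict_embedding_def)

lemma idL_comp:
  assumes "\<sigma> \<in> G"
  shows "idL \<circ> \<sigma> = \<sigma>"
proof
  fix x
  show "(idL \<circ> \<sigma>) x = \<sigma> x"
    using assms by (cases "x \<in> L") (simp_all add: idL_def restrict_embedding_def G_closed G_outside)
qed

lemma phi_comp: "\<sigma> \<in> G \<Longrightarrow> \<tau> \<in> G \<Longrightarrow> i < t \<Longrightarrow> \<phi> (\<sigma> \<circ> \<tau>) i = (\<phi> \<sigma> i + \<phi> \<tau> i) mod 2"
  using iso by (auto simp: iso_def hom_def galois_group_def)

lemma phi_bij: "bij_betw \<phi> G (\<Pi>\<^sub>E i\<in>{..<t}. {0..<2})"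
  using iso by (auto simp: iso_def galois_group_def carrier_integer_mod_group)

lemma phi_01:
  assumes "\<sigma> \<in> G" "i < t"
  shows "\<phi> \<sigma> i = 0 \<or> \<phi> \<sigma> i = 1"
proof -
  have "\<phi> \<sigma> i \<in> {0..<2}"
    using bij_betwE[OF phi_bij] assms by (auto simp: PiE_iff)
  then show ?thesis
    by auto
qed

lemma phi_eqI: "\<sigma> \<in> G \<Longrightarrow> \<tau> \<in> G \<Longrightarrow> (\<And>i. i < t \<Longrightarrow> \<phi> \<sigma> i = \<phi> \<tau> i) \<Longrightarrow> \<sigma> = \<tau>"
  using bij_betw_imp_inj_on[OF phi_bij] bij_betwE[OF phi_bij]
  by (metis PiE_ext inj_onD lessThan_iff)

lemma phi_idL: "i < t \<Longrightarrow> \<phi> idL i = 0"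
  using phi_comp[OF idL_G idL_G] idL_comp[OF idL_G] phi_01[OF idL_G] by fastforce

lemma involution: "\<sigma> \<in> G \<Longrightarrow> \<sigma> \<circ> \<sigma> = idL"
  using phi_comp phi_01 phi_idL by (intro phi_eqI G_comp idL_G) fastforce+

lemma involution_apply: "\<sigma> \<in> G \<Longrightarrow> x \<in> L \<Longrightarrow> \<sigma> (\<sigma> x) = x"
  using involution[of \<sigma>] by (auto simp: fun_eq_iff idL_def restrict_embedding_def dest: spec[of _ x])

definition gen :: "nat \<Rightarrow> real \<Rightarrow> real" where
  "gen i = (SOME \<sigma>. \<sigma> \<in> G \<and> \<phi> \<sigma> = (\<lambda>j\<in>{..<t}. if j = i then 1 else 0))"

lemma gen_spec: "gen i \<in> G \<and> \<phi> (gen i) = (\<lambda>j\<in>{..<t}. if j = i then 1 else 0)"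
proof -
  have "(\<lambda>j\<in>{..<t}. if j = i then 1 else 0) \<in> (\<Pi>\<^sub>E j\<in>{..<t}. {0..<2::int})"
    by auto
  then have "\<exists>\<sigma>. \<sigma> \<in> G \<and> \<phi> \<sigma> = (\<lambda>j\<in>{..<t}. if j = i then 1 else 0)"
    using phi_bij unfolding bij_betw_def by (metis imageE)
  then show ?thesis
    unfolding gen_def by (rule someI_ex)
qed

lemma gen_G: "gen i \<in> G" and phi_gen: "j < t \<Longrightarrow> \<phi> (gen i) j = (if j = i then 1 else 0)"
  using gen_spec by auto

lemma phi_comp_gen:
  assumes "\<sigma> \<in> G" "i < t" "j < t"
  shows "\<phi> (\<sigma> \<circ> gen j) i = (if i = j then 1 - \<phi> \<sigma> i else \<phi> \<sigma> i)"
  using phi_comp[OF assms(1) gen_G assms(2)] phi_gen[OF assms(2)] phi_01[OF assms(1,2)] by auto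

text \<open>The coordinate characters \<open>\<chi>\<^sub>i\<close> of \<open>G \<cong> (\<int>/2)\<^sup>t\<close>, as vectors indexed by \<open>G = embeddings L\<close>.\<close>

definition coord_char :: "nat \<Rightarrow> (real \<Rightarrow> real) \<Rightarrow> bit" where
  "coord_char i \<sigma> = (if \<sigma> \<in> G \<and> \<phi> \<sigma> i = 1 then 1 else 0)"

definition all_ones :: "(real \<Rightarrow> real) \<Rightarrow> bit" where
  "all_ones \<sigma> = (if \<sigma> \<in> G then 1 else 0)"

definition char_basis :: "((real \<Rightarrow> real) \<Rightarrow> bit) set" where
  "char_basis = insert all_ones (coord_char ` {..<t})"

lemma coord_char_comp_gen:
  assumes "\<sigma> \<in> G" "i < t" "j < t" "i \<noteq> j"
  shows "coord_char i (\<sigma> \<circ> gen j) = coord_char i \<sigma>"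
  using phi_comp_gen[OF assms(1-3)] assms G_comp[OF assms(1) gen_G] by (simp add: coord_char_def)

lemma character_idL:
  assumes "\<forall>\<sigma>\<in>G. \<forall>\<tau>\<in>G. f (\<sigma> \<circ> \<tau>) = f \<sigma> + (f \<tau> :: bit)"
  shows "f idL = 0"
  using assms idL_G idL_comp[OF idL_G] by (metis bit_add_self)

lemma character_expansion:
  assumes char: "\<forall>\<sigma>\<in>G. \<forall>\<tau>\<in>G. f (\<sigma> \<circ> \<tau>) = f \<sigma> + (f \<tau> :: bit)"
  shows "finite S \<Longrightarrow> S \<subseteq> {..<t} \<Longrightarrow> \<sigma> \<in> G \<Longrightarrow> \<forall>i<t. i \<notin> S \<longrightarrow> \<phi> \<sigma> i = 0 \<Longrightarrow>
    f \<sigma> = (\<Sum>i\<in>S. f (gen i) * coord_char i \<sigma>)"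
proof (induction S arbitrary: \<sigma> rule: finite_induct)
  case empty
  then have "\<sigma> = idL"
    by (intro phi_eqI) (simp_all add: idL_G phi_idL)
  with character_idL[OF char] show ?case
    by simp
next
  case (insert j S)
  note \<sigma> = insert.prems(2) and support = insert.prems(3)
  have j: "j < t" and S: "S \<subseteq> {..<t}"
    using insert.prems(1) by auto
  show ?case
  proof (cases "\<phi> \<sigma> j = 1")
    case False
    with phi_01[OF \<sigma> j] support have "\<forall>i<t. i \<notin> S \<longrightarrow> \<phi> \<sigma> i = 0"
      by auto
    then have "f \<sigma> = (\<Sum>i\<in>S. f (gen i) * coord_char i \<sigma>)"
      by (rule insert.IH[OF S \<sigma>])
    moreover have "coord_char j \<sigma> = 0"
      using False by (simp add: coord_char_def)
    ultimately show ?thesis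
      by (simp only: sum.insert[OF insert.hyps] mult_zero_right add_0)
  next
    case True
    have \<sigma>': "\<sigma> \<circ> gen j \<in> G"
      using \<sigma> gen_G by (rule G_comp)
    have "\<forall>i<t. i \<notin> S \<longrightarrow> \<phi> (\<sigma> \<circ> gen j) i = 0"
      using phi_comp_gen[OF \<sigma> _ j] True support by auto
    then have "f (\<sigma> \<circ> gen j) = (\<Sum>i\<in>S. f (gen i) * coord_char i (\<sigma> \<circ> gen j))"
      by (rule insert.IH[OF S \<sigma>'])
    also have "\<dots> = (\<Sum>i\<in>S. f (gen i) * coord_char i \<sigma>)"
      using S insert.hyps(2) coord_char_comp_gen[OF \<sigma> _ j] by (intro sum.cong) auto
    finally have "f \<sigma> + f (gen j) = (\<Sum>i\<in>S. f (gen i) * coord_char i \<sigma>)"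
      using char \<sigma> gen_G by simp
    then have "f \<sigma> = f (gen j) + (\<Sum>i\<in>S. f (gen i) * coord_char i \<sigma>)"
      by (rule bit_eq_add_swap)
    moreover have "coord_char j \<sigma> = 1"
      using True \<sigma> by (simp add: coord_char_def)
    ultimately show ?thesis
      by (simp only: sum.insert[OF insert.hyps] mult_1_right)
  qed
qed

lemma character_in_span_coord_chars:
  assumes "\<forall>\<sigma>. \<sigma> \<notin> G \<longrightarrow> f \<sigma> = 0" and "\<forall>\<sigma>\<in>G. \<forall>\<tau>\<in>G. f (\<sigma> \<circ> \<tau>) = f \<sigma> + (f \<tau> :: bit)"
  shows "f \<in> fun_space.span (coord_char ` {..<t})"
proof -
  have pointwise: "f \<sigma> = (\<Sum>i<t. f (gen i) * coord_char i \<sigma>)" for \<sigma>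
    using assms(1) character_expansion[OF assms(2), of "{..<t}" \<sigma>]
    by (cases "\<sigma> \<in> G") (auto simp: coord_char_def)
  have "f = (\<Sum>i<t. (\<lambda>\<sigma>. f (gen i) * coord_char i \<sigma>))"
    by (rule ext) (unfold sum_apply, rule pointwise)
  also have "\<dots> \<in> fun_space.span (coord_char ` {..<t})"
    by (intro fun_space.span_sum fun_space.span_scale fun_space.span_base) auto
  finally show ?thesis .
qed

lemma signature_eq: "signature L \<alpha> \<sigma> = (if \<sigma> \<in> G then sign_bit (\<sigma> \<alpha>) else 0)"
  by (simp add: signature_def sign_bit_def embeddings_eq)

lemma signature_minus_one: "signature L (- 1) = all_ones"
proof
  fix \<sigma>
  show "signature L (- 1) \<sigma> = all_ones \<sigma>"
    using G_embedding[of \<sigma>] subfield by (simp add: signature_eq all_ones_def sign_bit_def)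
qed

lemma conjugates_in_quadratic_subfield:
  assumes K: "K \<in> quadratic_subfields L" and \<epsilon>: "\<epsilon> \<in> K"
  obtains \<rho> where "\<forall>\<sigma>\<in>G. \<sigma> \<epsilon> = \<epsilon> \<or> \<sigma> \<epsilon> = \<rho>"
proof -
  have K: "is_subfield K" "K \<subseteq> L" "rat_degree K 2"
    using K by (auto simp: quadratic_subfields_def)
  let ?conj = "(\<lambda>\<sigma>. \<sigma> \<epsilon>) ` G"
  have "?conj \<subseteq> (\<lambda>\<tau>. \<tau> \<epsilon>) ` embeddings K"
  proof
    fix x assume "x \<in> ?conj"
    then obtain \<sigma> where \<sigma>: "\<sigma> \<in> G" and x: "x = \<sigma> \<epsilon>"
      by blast
    have "restrict_embedding K \<sigma> \<in> embeddings K"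
      using restrict_embedding_in_embeddings[OF K(1,2) G_embedding[OF \<sigma>]] .
    moreover have "x = restrict_embedding K \<sigma> \<epsilon>"
      using x \<epsilon> by (simp add: restrict_embedding_def)
    ultimately show "x \<in> (\<lambda>\<tau>. \<tau> \<epsilon>) ` embeddings K"
      by blast
  qed
  then have "card ?conj \<le> card ((\<lambda>\<tau>. \<tau> \<epsilon>) ` embeddings K)"
    using card_embeddings_le(1)[OF K(1,3)] by (intro card_mono) simp_all
  also have "\<dots> \<le> card (embeddings K)"
    using card_embeddings_le(1)[OF K(1,3)] by (rule card_image_le)
  also have "\<dots> \<le> 2"
    using card_embeddings_le(2)[OF K(1,3)] .
  finally have "card ?conj \<le> 2" .
  moreover have "\<epsilon> = idL \<epsilon>"
    using \<epsilon> K(2) by (auto simp: idL_def restrict_embedding_def)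
  then have "\<epsilon> \<in> ?conj"
    using idL_G by (rule image_eqI)
  ultimately obtain \<rho> where "?conj \<subseteq> {\<epsilon>, \<rho>}"
    using finite_imageI[OF finite_G] by (metis card_le_2_obtains_doubleton)
  with that show thesis
    by blast
qed

definition moved :: "real \<Rightarrow> (real \<Rightarrow> real) \<Rightarrow> bit" where
  "moved \<epsilon> \<sigma> = (if \<sigma> \<in> G \<and> \<sigma> \<epsilon> \<noteq> \<epsilon> then 1 else 0)"

text \<open>If \<open>\<tau>\<close> moves \<open>\<epsilon>\<close> to \<open>\<rho>\<close>, then the involution \<open>\<sigma>\<close> moves \<open>\<rho>\<close> back to \<open>\<epsilon>\<close> exactly when it
  moves \<open>\<epsilon>\<close>.\<close>

lemma moved_character:
  assumes \<epsilon>: "\<epsilon> \<in> L" and conj: "\<forall>\<sigma>\<in>G. \<sigma> \<epsilon> = \<epsilon> \<or> \<sigma> \<epsilon> = \<rho>" and \<sigma>: "\<sigma> \<in> G" and \<tau>: "\<tau> \<in> G"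
  shows "moved \<epsilon> (\<sigma> \<circ> \<tau>) = moved \<epsilon> \<sigma> + moved \<epsilon> \<tau>"
proof (cases "\<tau> \<epsilon> = \<epsilon>")
  case True
  with \<sigma> \<tau> show ?thesis
    by (simp add: moved_def G_comp)
next
  case False
  then have \<tau>\<epsilon>: "\<tau> \<epsilon> = \<rho>"
    using conj \<tau> by blast
  have "\<sigma> (\<tau> \<epsilon>) = \<epsilon> \<longleftrightarrow> \<sigma> \<epsilon> \<noteq> \<epsilon>"
  proof
    assume "\<sigma> (\<tau> \<epsilon>) = \<epsilon>"
    then have "\<tau> \<epsilon> = \<sigma> \<epsilon>"
      using involution_apply[OF \<sigma> G_closed[OF \<tau> \<epsilon>]] by simp
    with False show "\<sigma> \<epsilon> \<noteq> \<epsilon>"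
      by simp
  next
    assume "\<sigma> \<epsilon> \<noteq> \<epsilon>"
    then have "\<sigma> \<epsilon> = \<rho>"
      using conj \<sigma> by blast
    with \<tau>\<epsilon> show "\<sigma> (\<tau> \<epsilon>) = \<epsilon>"
      using involution_apply[OF \<sigma> \<epsilon>] by simp
  qed
  with \<sigma> \<tau> False show ?thesis
    by (cases "\<sigma> \<epsilon> = \<epsilon>") (simp_all add: moved_def G_comp)
qed

lemma signature_in_span_char_basis:
  assumes K: "K \<in> quadratic_subfields L" and \<epsilon>: "\<epsilon> \<in> K"
  shows "signature L \<epsilon> \<in> fun_space.span char_basis"
proof -
  obtain \<rho> where conj: "\<forall>\<sigma>\<in>G. \<sigma> \<epsilon> = \<epsilon> \<or> \<sigma> \<epsilon> = \<rho>"
    using conjugates_in_quadratic_subfield[OF K \<epsilon>] .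
  have "\<epsilon> \<in> L"
    using K \<epsilon> by (auto simp: quadratic_subfields_def)
  then have "moved \<epsilon> \<in> fun_space.span (coord_char ` {..<t})"
    using moved_character[OF _ conj] by (intro character_in_span_coord_chars) (auto simp: moved_def)
  moreover have "coord_char ` {..<t} \<subseteq> char_basis"
    by (auto simp: char_basis_def)
  ultimately have moved_span: "moved \<epsilon> \<in> fun_space.span char_basis"
    using fun_space.span_mono by blast
  have "signature L \<epsilon> = (\<lambda>\<sigma>. sign_bit \<epsilon> * all_ones \<sigma>) + (\<lambda>\<sigma>. (sign_bit \<epsilon> + sign_bit \<rho>) * moved \<epsilon> \<sigma>)"
  proof
    fix \<sigma>
    show "signature L \<epsilon> \<sigma> = ((\<lambda>\<sigma>. sign_bit \<epsilon> * all_ones \<sigma>) + (\<lambda>\<sigma>. (sign_bit \<epsilon> + sign_bit \<rho>) * moved \<epsilon> \<sigma>)) \<sigma>"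
      using conj by (cases "\<sigma> \<in> G"; cases "\<sigma> \<epsilon> = \<epsilon>") (auto simp: signature_eq all_ones_def moved_def)
  qed
  also have "\<dots> \<in> fun_space.span char_basis"
    by (intro fun_space.span_add fun_space.span_scale moved_span fun_space.span_base)
      (simp add: char_basis_def)
  finally show ?thesis .
qed

subsection \<open>Every character comes from a quadratic subfield\<close>

definition char_sign :: "nat \<Rightarrow> (real \<Rightarrow> real) \<Rightarrow> real" where
  "char_sign i \<sigma> = (if \<phi> \<sigma> i = 1 then - 1 else 1)"

lemma char_sign_comp:
  assumes "\<sigma> \<in> G" "\<tau> \<in> G" "i < t"
  shows "char_sign i (\<sigma> \<circ> \<tau>) = char_sign i \<sigma> * char_sign i \<tau>"
  using phi_comp[OF assms] phi_01[OF assms(1,3)] phi_01[OF assms(2,3)] by (auto simp: char_sign_def)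

lemma char_sign_gen: "i < t \<Longrightarrow> char_sign i (gen i) = - 1"
  using phi_gen by (simp add: char_sign_def)

lemma embedding_char_sign_mult:
  assumes "h \<in> G" "w \<in> L"
  shows "h (char_sign i g * w) = char_sign i g * h w"
  using assms subfield G_embedding[OF assms(1)] by (simp add: char_sign_def)

definition twisted_trace :: "nat \<Rightarrow> real \<Rightarrow> real" where
  "twisted_trace i x = (\<Sum>g\<in>G. char_sign i g * g x)"

lemma twisted_trace_in_L: "x \<in> L \<Longrightarrow> twisted_trace i x \<in> L"
  unfolding twisted_trace_def using subfield G_closed by (intro subfield_sum) (simp_all add: char_sign_def)

lemma comp_involution: "h \<in> G \<Longrightarrow> g \<in> G \<Longrightarrow> h \<circ> (h \<circ> g) = g"
  by (metis comp_assoc involution idL_comp)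

lemma twisted_trace_eigen:
  assumes i: "i < t" and h: "h \<in> G" and x: "x \<in> L"
  shows "h (twisted_trace i x) = char_sign i h * twisted_trace i x"
proof -
  have "h (twisted_trace i x) = (\<Sum>g\<in>G. h (char_sign i g * g x))"
    unfolding twisted_trace_def using subfield G_closed x
    by (subst embedding_sum[OF subfield G_embedding[OF h]]) (simp_all add: char_sign_def)
  also have "\<dots> = (\<Sum>g\<in>G. char_sign i g * (h \<circ> g) x)"
    using embedding_char_sign_mult[OF h] G_closed x by (intro sum.cong) simp_all
  also have "\<dots> = (\<Sum>g\<in>G. char_sign i (h \<circ> g) * g x)"
    by (rule sum.reindex_bij_witness[where i = "\<lambda>g. h \<circ> g" and j = "\<lambda>g. h \<circ> g"])
      (simp_all add: comp_involution[OF h] G_comp[OF h])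
  also have "\<dots> = char_sign i h * twisted_trace i x"
    unfolding twisted_trace_def using char_sign_comp[OF h _ i]
    by (simp add: sum_distrib_left mult.assoc)
  finally show ?thesis .
qed

lemma twisted_trace_nonzero:
  obtains x where "x \<in> L" "twisted_trace i x \<noteq> 0"
proof -
  have "\<exists>x\<in>L. (\<Sum>g\<in>G. char_sign i g * g x) \<noteq> 0"
  proof (rule ccontr)
    assume "\<not> ?thesis"
    then have "\<forall>g\<in>G. char_sign i g = 0"
      using embedding_relation_trivial[OF subfield finite_G] embeddings_eq by simp
    then have "char_sign i idL = 0"
      using idL_G by blast
    then show False
      by (simp add: char_sign_def split: if_splits)
  qed
  with that show thesis
    unfolding twisted_trace_def by blast
qed

lemma char_eigenvector:
  assumes i: "i < t"
  obtains y q where "y \<in> L" "y \<notin> \<rat>" "y * y = of_rat q" "\<forall>\<sigma>\<in>G. \<sigma> y = char_sign i \<sigma> * y"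
proof -
  obtain x where x: "x \<in> L" "twisted_trace i x \<noteq> 0"
    by (rule twisted_trace_nonzero)
  define y where "y = twisted_trace i x"
  have y: "y \<in> L" "y \<noteq> 0"
    using twisted_trace_in_L x by (simp_all add: y_def)
  have eigen: "\<forall>\<sigma>\<in>G. \<sigma> y = char_sign i \<sigma> * y"
    using twisted_trace_eigen[OF i _ x(1)] by (simp add: y_def)
  have "y * y \<in> \<rat>"
  proof (rule fixed_element_rational[OF subfield degree card_automorphisms])
    show "y * y \<in> L"
      using y subfield by simp
    show "\<forall>\<sigma>\<in>G. \<sigma> (y * y) = y * y"
      using eigen y subfield G_embedding by (auto simp: char_sign_def)
  qed
  then obtain q where q: "y * y = of_rat q"
    by (auto elim: Rats_cases)
  have "y \<notin> \<rat>"
  proof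
    assume "y \<in> \<rat>"
    then have "gen i y = y"
      using subfield G_embedding[OF gen_G] by (auto elim: Rats_cases)
    moreover have "gen i y = - y"
      using bspec[OF eigen gen_G] char_sign_gen[OF i] by simp
    ultimately show False
      using y(2) by simp
  qed
  with y(1) q eigen that show thesis
    by blast
qed

text \<open>A unit of norm \<open>-1\<close> in \<open>\<rat>(y)\<close> is mapped to \<open>-1/\<epsilon>\<close> exactly by the automorphisms
  with \<open>\<chi>\<^sub>i = 1\<close>, which flips its sign.\<close>

lemma coord_char_in_span_signature:
  assumes i: "i < t" and y: "y \<in> L" "y \<notin> \<rat>" "y * y = of_rat q"
    and eigen: "\<forall>\<sigma>\<in>G. \<sigma> y = char_sign i \<sigma> * y"
    and \<epsilon>: "\<epsilon> \<in> rat_adjoin y" and norm: "field_norm (rat_adjoin y) \<epsilon> = - 1"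
  shows "coord_char i \<in> fun_space.span {all_ones, signature L \<epsilon>}"
proof -
  obtain a b where ab: "\<epsilon> = of_rat a + of_rat b * y"
    using \<epsilon> by (rule rat_adjoin_memE)
  have "gen i y = - y"
    using bspec[OF eigen gen_G] char_sign_gen[OF i] by simp
  with norm ab have "\<epsilon> * (of_rat a - of_rat b * y) = - 1"
    using field_norm_rat_adjoin[OF subfield y G_embedding[OF gen_G]] by simp
  moreover from this have \<epsilon>0: "\<epsilon> \<noteq> 0"
    by auto
  ultimately have conj: "of_rat a - of_rat b * y = - 1 / \<epsilon>"
    by (metis nonzero_mult_div_cancel_left)
  have \<sigma>\<epsilon>: "\<sigma> \<epsilon> = (if \<phi> \<sigma> i = 1 then - 1 / \<epsilon> else \<epsilon>)" if \<sigma>: "\<sigma> \<in> G" for \<sigma>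
  proof -
    have "\<sigma> \<epsilon> = of_rat a + of_rat b * \<sigma> y"
      using ab embedding_rat_adjoin[OF subfield G_embedding[OF \<sigma>] y(1)] by simp
    moreover have "\<sigma> y = char_sign i \<sigma> * y"
      using eigen \<sigma> by blast
    ultimately show ?thesis
      using conj ab[symmetric] by (simp add: char_sign_def)
  qed
  have "coord_char i = (\<lambda>\<sigma>. sign_bit \<epsilon> * all_ones \<sigma>) + (\<lambda>\<sigma>. 1 * signature L \<epsilon> \<sigma>)"
  proof
    fix \<sigma>
    show "coord_char i \<sigma> = ((\<lambda>\<sigma>. sign_bit \<epsilon> * all_ones \<sigma>) + (\<lambda>\<sigma>. 1 * signature L \<epsilon> \<sigma>)) \<sigma>"
      using \<sigma>\<epsilon>[of \<sigma>] sign_bit_minus_inverse[OF \<epsilon>0]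
      by (cases "\<sigma> \<in> G") (simp_all add: coord_char_def all_ones_def signature_eq)
  qed
  also have "\<dots> \<in> fun_space.span {all_ones, signature L \<epsilon>}"
    by (intro fun_space.span_add fun_space.span_scale fun_space.span_base) simp_all
  finally show ?thesis .
qed

lemma quadratic_subfield_of_coord_char:
  assumes "i < t"
  obtains K where "K \<in> quadratic_subfields L"
    and "\<And>\<epsilon>. \<epsilon> \<in> K \<Longrightarrow> field_norm K \<epsilon> = - 1 \<Longrightarrow> coord_char i \<in> fun_space.span {all_ones, signature L \<epsilon>}"
proof -
  obtain y q where y: "y \<in> L" "y \<notin> \<rat>" "y * y = of_rat q" "\<forall>\<sigma>\<in>G. \<sigma> y = char_sign i \<sigma> * y"
    using char_eigenvector[OF assms] by blast
  show thesis
    using that rat_adjoin_quadratic_subfield[OF subfield y(1-3)] coord_char_in_span_signature[OF assms y]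
    by blast
qed

lemma coord_char_gen: "i < t \<Longrightarrow> j < t \<Longrightarrow> coord_char j (gen i) = (if j = i then 1 else 0)"
  using gen_G phi_gen by (simp add: coord_char_def)

lemma inj_on_coord_char: "inj_on coord_char {..<t}"
proof (rule inj_onI)
  fix i j assume i: "i \<in> {..<t}" and j: "j \<in> {..<t}" and "coord_char i = coord_char j"
  then have "coord_char i (gen i) = coord_char j (gen i)"
    by simp
  with i j show "i = j"
    by (simp add: coord_char_gen split: if_splits)
qed

lemma independent_coord_chars: "fun_space.independent (coord_char ` {..<t})"
proof -
  have scalars_zero: "\<forall>v\<in>T. u v = 0"
    if T: "T \<subseteq> coord_char ` {..<t}" "finite T" and rel: "(\<Sum>v\<in>T. (\<lambda>x. u v * v x)) = 0" for T u
  proof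
    fix v assume "v \<in> T"
    with T(1) have "v \<in> coord_char ` {..<t}"
      by blast
    then obtain j where j: "j < t" "v = coord_char j"
      by auto
    have at_gen: "w (gen j) = (if w = v then 1 else 0)" if "w \<in> T" for w
    proof -
      from that T(1) have "w \<in> coord_char ` {..<t}"
        by blast
      then obtain k where k: "k < t" "w = coord_char k"
        by auto
      then have "w = v \<longleftrightarrow> k = j"
        using inj_on_eq_iff[OF inj_on_coord_char, of k j] j by simp
      with k j show ?thesis
        by (simp add: coord_char_gen)
    qed
    have "0 = (\<Sum>w\<in>T. u w * w (gen j))"
      using fun_cong[OF rel, of "gen j"] by (simp only: sum_apply zero_fun_apply)
    also have "\<dots> = (\<Sum>w\<in>T. if w = v then u w else 0)"
    proof (rule sum.cong)
      fix w assume "w \<in> T"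
      then show "u w * w (gen j) = (if w = v then u w else 0)"
        using at_gen[of w] by simp
    qed simp
    also have "\<dots> = u v"
      using T(2) \<open>v \<in> T\<close> by simp
    finally show "u v = 0"
      by simp
  qed
  then show ?thesis
    unfolding fun_space.independent_explicit_finite_subsets
    by (intro allI impI) (rule scalars_zero)
qed

lemma all_ones_not_in_span: "all_ones \<notin> fun_space.span (coord_char ` {..<t})"
proof
  let ?V = "{f :: (real \<Rightarrow> real) \<Rightarrow> bit. f idL = 0}"
  assume "all_ones \<in> fun_space.span (coord_char ` {..<t})"
  moreover have "coord_char ` {..<t} \<subseteq> ?V"
    using phi_idL by (auto simp: coord_char_def)
  moreover have "fun_space.subspace ?V"
    unfolding fun_space.subspace_def by simp
  ultimately have "all_ones \<in> ?V"
    using fun_space.span_minimal by blast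
  then show False
    using idL_G by (simp add: all_ones_def)
qed

lemma independent_char_basis: "fun_space.independent char_basis"
  unfolding char_basis_def using all_ones_not_in_span independent_coord_chars
  by (rule fun_space.independent_insertI)

lemma card_char_basis: "card char_basis = t + 1"
proof -
  have "all_ones \<notin> coord_char ` {..<t}"
    using all_ones_not_in_span fun_space.span_base[of all_ones "coord_char ` {..<t}"] by blast
  then show ?thesis
    using card_image[OF inj_on_coord_char] by (simp add: char_basis_def)
qed

definition signatures :: "(real set \<Rightarrow> real) \<Rightarrow> ((real \<Rightarrow> real) \<Rightarrow> bit) set" where
  "signatures \<epsilon> = insert (signature L (- 1)) (signature L ` \<epsilon> ` quadratic_subfields L)"

lemma signatures_in_span_char_basis:
  assumes "\<forall>K\<in>quadratic_subfields L. \<epsilon> K \<in> K"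
  shows "signatures \<epsilon> \<subseteq> fun_space.span char_basis"
proof -
  have "all_ones \<in> fun_space.span char_basis"
    by (rule fun_space.span_base) (simp add: char_basis_def)
  then show ?thesis
    using signature_in_span_char_basis assms by (auto simp: signatures_def signature_minus_one)
qed

lemma dim_signatures_le: "\<forall>K\<in>quadratic_subfields L. \<epsilon> K \<in> K \<Longrightarrow> fun_space.dim (signatures \<epsilon>) \<le> t + 1"
  using fun_space.dim_le_card[OF signatures_in_span_char_basis] card_char_basis
  by (simp add: char_basis_def)

lemma char_basis_in_span_signatures:
  assumes units: "\<forall>K\<in>quadratic_subfields L. \<epsilon> K \<in> K \<and> field_norm K (\<epsilon> K) = - 1"
  shows "char_basis \<subseteq> fun_space.span (signatures \<epsilon>)"
proof -
  have "coord_char i \<in> fun_space.span (signatures \<epsilon>)" if i: "i < t" for i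
  proof -
    obtain K where K: "K \<in> quadratic_subfields L"
      and span: "\<And>\<epsilon>. \<epsilon> \<in> K \<Longrightarrow> field_norm K \<epsilon> = - 1 \<Longrightarrow>
        coord_char i \<in> fun_space.span {all_ones, signature L \<epsilon>}"
      using quadratic_subfield_of_coord_char[OF i] by blast
    have "{all_ones, signature L (\<epsilon> K)} \<subseteq> signatures \<epsilon>"
      using K by (auto simp: signatures_def signature_minus_one)
    with span units K show ?thesis
      using fun_space.span_mono by blast
  qed
  moreover have "all_ones \<in> fun_space.span (signatures \<epsilon>)"
    by (rule fun_space.span_base) (simp add: signatures_def signature_minus_one)
  ultimately show ?thesis
    by (auto simp: char_basis_def)
qed

lemma dim_signatures_eq:
  assumes "\<forall>K\<in>quadratic_subfields L. \<epsilon> K \<in> K \<and> field_norm K (\<epsilon> K) = - 1"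
  shows "fun_space.dim (signatures \<epsilon>) = t + 1"
proof -
  have "fun_space.span (signatures \<epsilon>) = fun_space.span char_basis"
    using signatures_in_span_char_basis char_basis_in_span_signatures assms
    by (simp add: fun_space.span_eq)
  then have "fun_space.dim (signatures \<epsilon>) = fun_space.dim char_basis"
    by (rule fun_space.span_eq_dim)
  also have "\<dots> = t + 1"
    using fun_space.dim_eq_card_independent[OF independent_char_basis] card_char_basis by simp
  finally show ?thesis .
qed

end

theorem proposition6p2:
  fixes L :: "real set" and t :: nat and \<epsilon> :: "real set \<Rightarrow> real"
  assumes "real_multiquadratic L t"
    and "\<forall>K\<in>quadratic_subfields L. fundamental_unit K (\<epsilon> K)"
  shows "vector_space.dim (\<lambda>(c::bit) f \<sigma>. c * f \<sigma>)
           (insert (signature L (-1)) (signature L ` \<epsilon> ` quadratic_subfields L)) \<le> t + 1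
    \<and> ((\<forall>K\<in>quadratic_subfields L. field_norm K (\<epsilon> K) = -1) \<longrightarrow>
         vector_space.dim (\<lambda>(c::bit) f \<sigma>. c * f \<sigma>)
           (insert (signature L (-1)) (signature L ` \<epsilon> ` quadratic_subfields L)) = t + 1)"
proof -
  obtain n \<phi> where "multiquadratic L n t \<phi>"
    using assms(1) by (auto simp: real_multiquadratic_def is_iso_def multiquadratic_def)
  then interpret multiquadratic L n t \<phi> .
  have units: "\<forall>K\<in>quadratic_subfields L. \<epsilon> K \<in> K"
    using assms(2) by (auto simp: fundamental_unit_def is_unit_OK_def)
  show ?thesis
    using dim_signatures_le[OF units] dim_signatures_eq units
    by (simp add: signatures_def)
qed

end
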